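(* Fix $q\in[0,1]$, $p\in(0,1)\setminus\{1/2\}$, $f:[0,1]\to[0,1]$, and a nondecreasing sequence of positive integers $k(n)$ with $k(n)\leq n$ and $k(n)\to\infty$. Let $\{S_n\}$ be the elephant random walk with $k(n)$ extractions with replacement described in the context, and $g(x)=pf(x)+(1-p)\{1-f(x)\}$. Assume one of: (F1) $f$ is continuous on $[0,1]$ and $\sum_{n\geq1}\frac{1}{n+1}\sup\{|f(x)-f(y)|:x,y\in[0,1],|x-y|<k(n)^{-1/2}\}<\infty$; (F2) for some $0<\alpha\leq1$ and $L>0$, $|f(x)-f(y)|\leq L|x-y|^{\alpha}$ for all $x,y\in[0,1]$, and $\sum_{n\geq1}(n+1)^{-1}k(n)^{-\alpha/2}<\infty$; (F3) $f$ is continuously differentiable on $[0,1]$ and $\sum_{n\geq1}\frac{1}{(n+1)\sqrt{k(n)}}\sup\{|f'(x)-f'(y)|:x,y\in[0,1],|x-y|<k(n)^{-1/2}\}<\infty$; (F4) $f$ is twice continuously differentiable on $[0,1]$ and $\sum_{n\geq1}(n+1)^{-1}k(n)^{-1}<\infty$. If $g$ has a unique fixed point $x^*\in[0,1]$ such that $\{g(x)-x\}(x-x^* )<0$ for every $x\in[0,1]\setminus\{x^*\}$, then $S_n/n\to 2x^*-1$ almost surely. In particular (still assuming one of (F1)–(F4)) the same conclusion holds whenever $g$ has a unique fixed point $x^*$ in $[0,1]$, and in particular whenever one of the following holds: (G1) $f$ is continuously differentiable on $[0,1]$, and either $p\in(1/2,1)$ and $f$ is strictly decreasing on $[0,1]$,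 or $p\in(0,1/2)$ and $f$ is strictly increasing on $[0,1]$; (G2) $f$ is twice continuously differentiable on $[0,1]$ and is either strictly convex on $(0,1)$ or strictly concave on $(0,1)$; (G3) $|f(x)-f(y)|\leq c|x-y|$ for all $x,y\in[0,1]$ for some $c$ with $c|2p-1|<1$.
   Context: The model: set $X_0=S_0=0$ and let $X_1\in\{\pm1\}$ with $P(X_1=1)=q$. Let $\mathcal{F}_n$ be the $\sigma$-field of all information of the process up to time $n$. For each $n\geq1$, draw $U_{n,1},\dots,U_{n,k(n)}$ i.i.d. uniform on $\{1,\dots,n\}$ (independently of the past), set $C_n^+=\sum_{i=1}^{k(n)}\chi\{X_{U_{n,i}}=1\}$, and, conditionally on $\mathcal{F}_n$ and the $U_{n,i}$, let $X_{n+1}=1$ with probability $pf(C_n^+/k(n))+(1-p)\{1-f(C_n^+/k(n))\}$ and $X_{n+1}=-1$ otherwise. Set $S_n=\sum_{i=1}^n X_i$. *)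

theory Defs
  imports "HOL-Probability.Probability"
begin

definition erw_g :: "real \<Rightarrow> (real \<Rightarrow> real) \<Rightarrow> real \<Rightarrow> real" where
  "erw_g p f x = p * f x + (1 - p) * (1 - f x)"

definition strictly_convex_on :: "real set \<Rightarrow> (real \<Rightarrow> real) \<Rightarrow> bool" where
  "strictly_convex_on S f \<longleftrightarrow>
     (\<forall>x\<in>S. \<forall>y\<in>S. x \<noteq> y \<longrightarrow>
        (\<forall>t\<in>{0<..<1}. f ((1 - t) * x + t * y) < (1 - t) * f x + t * f y))"

definition modulus01 :: "(real \<Rightarrow> real) \<Rightarrow> real \<Rightarrow> real" where
  "modulus01 h d = Sup {\<bar>h x - h y\<bar> | x y. x \<in> {0..1} \<and> y \<in> {0..1} \<and> \<bar>x - y\<bar> < d}"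

definition C1_01 :: "(real \<Rightarrow> real) \<Rightarrow> (real \<Rightarrow> real) \<Rightarrow> bool" where
  "C1_01 f f' \<longleftrightarrow> (\<forall>x\<in>{0..1}. (f has_real_derivative f' x) (at x within {0..1}))
                   \<and> continuous_on {0..1} f'"

definition C2_01 :: "(real \<Rightarrow> real) \<Rightarrow> bool" where
  "C2_01 f \<longleftrightarrow> (\<exists>f' f''. (\<forall>x\<in>{0..1}. (f has_real_derivative f' x) (at x within {0..1}))
                   \<and> C1_01 f' f'')"

text \<open>History (the information generating F_n): X_1..X_n and U_{m,i} for 1<=m<n, 1<=i<=k(m).\<close>
definition erw_hist ::
  "(nat \<Rightarrow> nat) \<Rightarrow> (nat \<Rightarrow> 'a \<Rightarrow> real) \<Rightarrow> (nat \<Rightarrow> nat \<Rightarrow> 'a \<Rightarrow> nat) \<Rightarrow> nat \<Rightarrow> 'a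
     \<Rightarrow> real list \<times> nat list list" where
  "erw_hist k X U n \<omega> =
     (map (\<lambda>i. X i \<omega>) [1..<n+1], map (\<lambda>m. map (\<lambda>i. U m i \<omega>) [1..<k m + 1]) [1..<n])"

definition erw_Uvec :: "(nat \<Rightarrow> nat) \<Rightarrow> (nat \<Rightarrow> nat \<Rightarrow> 'a \<Rightarrow> nat) \<Rightarrow> nat \<Rightarrow> 'a \<Rightarrow> nat list" where
  "erw_Uvec k U n \<omega> = map (\<lambda>i. U n i \<omega>) [1..<k n + 1]"

definition erw_C :: "(nat \<Rightarrow> nat) \<Rightarrow> (nat \<Rightarrow> 'a \<Rightarrow> real) \<Rightarrow> (nat \<Rightarrow> nat \<Rightarrow> 'a \<Rightarrow> nat) \<Rightarrow> nat \<Rightarrow> 'a \<Rightarrow> nat" where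
  "erw_C k X U n \<omega> = card {i \<in> {1..k n}. X (U n i \<omega>) \<omega> = 1}"

text \<open>Since all variables are discrete,
  the conditional laws are stated via elementary conditional probabilities on the
  generating events of F_n and of sigma(F_n, U_n).\<close>
definition erw_process ::
  "'a measure \<Rightarrow> real \<Rightarrow> real \<Rightarrow> (real \<Rightarrow> real) \<Rightarrow> (nat \<Rightarrow> nat)
     \<Rightarrow> (nat \<Rightarrow> 'a \<Rightarrow> real) \<Rightarrow> (nat \<Rightarrow> nat \<Rightarrow> 'a \<Rightarrow> nat) \<Rightarrow> bool" where
  "erw_process M q p f k X U \<longleftrightarrow>
     prob_space M \<and>
     (\<forall>n. X n \<in> measurable M (count_space UNIV)) \<and>
     (\<forall>n\<ge>1. \<forall>i\<in>{1..k n}. U n i \<in> measurable M (count_space UNIV)) \<and>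
     (\<forall>\<omega>\<in>space M. X 0 \<omega> = 0) \<and>
     (\<forall>n\<ge>1. \<forall>\<omega>\<in>space M. X n \<omega> \<in> {-1, 1}) \<and>
     (\<forall>n\<ge>1. \<forall>i\<in>{1..k n}. \<forall>\<omega>\<in>space M. U n i \<omega> \<in> {1..n}) \<and>
     measure M {\<omega>\<in>space M. X 1 \<omega> = 1} = q \<and>
     \<comment> \<open>U_{n,1..k(n)} i.i.d. uniform on {1..n}, independent of F_n\<close>
     (\<forall>n\<ge>1. \<forall>S u. length u = k n \<longrightarrow> set u \<subseteq> {1..n} \<longrightarrow>
        measure M {\<omega>\<in>space M. erw_hist k X U n \<omega> \<in> S \<and> erw_Uvec k U n \<omega> = u}
          = measure M {\<omega>\<in>space M. erw_hist k X U n \<omega> \<in> S} / real n ^ k n) \<and>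
     \<comment> \<open>P(X_{n+1} = 1 | F_n, U_n) = g(C_n^+ / k(n))\<close>
     (\<forall>n\<ge>1. \<forall>T.
        measure M {\<omega>\<in>space M. (erw_hist k X U n \<omega>, erw_Uvec k U n \<omega>) \<in> T \<and> X (Suc n) \<omega> = 1}
          = (LINT \<omega>:{\<omega>\<in>space M. (erw_hist k X U n \<omega>, erw_Uvec k U n \<omega>) \<in> T}|M.
               erw_g p f (real (erw_C k X U n \<omega>) / real (k n))))"

end

theory Submission
  imports Defs
begin

text \<open>Let Y n be the proportion of up-steps among X 1, ..., X n. Given the past, X (n+1) = 1 with
  probability B n, the mean of g (C/k(n)) over samples of k(n) indices drawn with replacement; as
  k(n) \<rightarrow> \<infinity> and g is uniformly continuous, B n = g (Y n) + o(1) uniformly in the past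
  (the Bernstein polynomial estimate). Hence (n+1) Y (n+1) = n Y n + g (Y n) + o(1) + \<zeta> n with
  bounded martingale differences \<zeta> n, whose averages vanish almost surely because their partial
  sums have fourth moment O(n^2) (Borel-Cantelli). What remains is a deterministic recursion
  v (n+1) = v n + (g (v n) - v n + o(1)) / (n+1) which, the harmonic series being divergent, is
  driven to the attracting fixed point of g.\<close>

section \<open>Fixed points on the unit interval\<close>

lemma fixpoint_exists_unit_interval:
  fixes g :: "real \<Rightarrow> real"
  assumes "continuous_on {0..1} g" "0 \<le> g 0" "g 1 \<le> 1"
  shows "\<exists>x\<in>{0..1}. g x = x"
proof -
  have "continuous_on {0..1} (\<lambda>x. g x - x)" by (intro continuous_intros assms(1))
  then obtain x where "0 \<le> x" "x \<le> 1" "g x - x = 0"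
    using IVT2'[of "\<lambda>x. g x - x" 1 0 0] assms by auto
  then show ?thesis by auto
qed

lemma unique_fixpoint_imp_attracting:
  fixes g :: "real \<Rightarrow> real"
  assumes cont: "continuous_on {0..1} g" and "0 \<le> g 0" "g 1 \<le> 1"
    and uniq: "\<forall>x\<in>{0..1}. g x = x \<longrightarrow> x = xs"
    and x: "x \<in> {0..1}" "x \<noteq> xs"
  shows "(g x - x) * (x - xs) < 0"
proof -
  have "continuous_on {a..b} (\<lambda>x. g x - x)" if "{a..b} \<subseteq> {0..1}" for a b
    by (intro continuous_intros continuous_on_subset[OF cont that])
  note IVT = IVT2'[of "\<lambda>x. g x - x", OF _ _ _ this]
  show ?thesis
  proof (cases "x < xs")
    case True
    have "g x - x > 0"
    proof (rule ccontr)
      assume "\<not> g x - x > 0"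
      then obtain z where "0 \<le> z" "z \<le> x" "g z - z = 0"
        using IVT[of x 0 0] assms x by auto
      with uniq x True show False by auto
    qed
    with True show ?thesis by (simp add: mult_pos_neg)
  next
    case False
    with x have "xs < x" by simp
    have "g x - x < 0"
    proof (rule ccontr)
      assume "\<not> g x - x < 0"
      then obtain z where "x \<le> z" "z \<le> 1" "g z - z = 0"
        using IVT[of 1 0 x] assms x by auto
      with uniq x \<open>xs < x\<close> show False by auto
    qed
    with \<open>xs < x\<close> show ?thesis by (simp add: mult_neg_pos)
  qed
qed

lemma strict_antimono_on_fixpoint_unique:
  fixes g :: "real \<Rightarrow> real"
  assumes "strict_antimono_on S g" "x \<in> S" "y \<in> S" "g x = x" "g y = y"
  shows "x = y"
  using assms monotone_onD[OF assms(1), of x y] monotone_onD[OF assms(1), of y x]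
  by (cases x y rule: linorder_cases) auto

lemma contraction_fixpoint_unique:
  fixes g :: "real \<Rightarrow> real"
  assumes "\<bar>g x - g y\<bar> \<le> c * \<bar>x - y\<bar>" "c < 1" "g x = x" "g y = y"
  shows "x = y"
proof (rule ccontr)
  assume "x \<noteq> y"
  then have "c * \<bar>x - y\<bar> < \<bar>x - y\<bar>" using \<open>c < 1\<close> by simp
  with assms show False by simp
qed

lemma strictly_convex_on_affine:
  assumes "strictly_convex_on S \<phi>" "c > 0"
  shows "strictly_convex_on S (\<lambda>x. c * \<phi> x + a * x + b)"
  unfolding strictly_convex_on_def
proof (intro ballI impI)
  fix x y t assume "x \<in> S" "y \<in> S" "x \<noteq> y" "t \<in> {0<..<1::real}"
  with assms have "c * \<phi> ((1 - t) * x + t * y) < c * ((1 - t) * \<phi> x + t * \<phi> y)"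
    unfolding strictly_convex_on_def by simp
  then show "c * \<phi> ((1 - t) * x + t * y) + a * ((1 - t) * x + t * y) + b
         < (1 - t) * (c * \<phi> x + a * x + b) + t * (c * \<phi> y + a * y + b)"
    by (simp add: algebra_simps)
qed

lemma strictly_convex_on_pos_beyond_zeros:
  assumes convex: "strictly_convex_on S \<phi>" and "a \<in> S" "b \<in> S" "z \<in> S"
    and "\<phi> a = 0" "\<phi> b = 0" and between: "(a < b \<and> b < z) \<or> (z < b \<and> b < a)"
  shows "\<phi> z > 0"
proof -
  define t where "t = (b - a) / (z - a)"
  have t: "t \<in> {0<..<1}" using between by (auto simp: t_def field_simps)
  have "(1 - t) * a + t * z = b" using between by (auto simp: t_def field_simps)
  then have "\<phi> b < (1 - t) * \<phi> a + t * \<phi> z"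
    using convex assms(2,4) between t unfolding strictly_convex_on_def by force
  with assms(5,6) t show ?thesis by (simp add: zero_less_mult_iff)
qed

lemma strictly_convex_on_unit_interval_zero_unique:
  fixes \<phi> :: "real \<Rightarrow> real"
  assumes cont: "continuous_on {0..1} \<phi>" and convex: "strictly_convex_on {0<..<1} \<phi>"
    and ends: "\<phi> 0 * \<phi> 1 < 0"
    and "x \<in> {0..1}" "y \<in> {0..1}" "\<phi> x = 0" "\<phi> y = 0"
  shows "x = y"
proof -
  have IVT: "\<exists>w\<in>{a..b}. \<phi> w = 0" if ab: "0 \<le> a" "a \<le> b" "b \<le> 1" "\<phi> a * \<phi> b \<le> 0" for a b
  proof -
    have c: "continuous_on {a..b} \<phi>" using ab by (intro continuous_on_subset[OF cont]) auto
    consider "\<phi> a \<le> 0" "0 \<le> \<phi> b" | "\<phi> b \<le> 0" "0 \<le> \<phi> a"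
      using ab(4) by (auto simp: mult_le_0_iff)
    then show ?thesis
      using IVT'[of \<phi> a 0 b, OF _ _ _ c] IVT2'[of \<phi> b 0 a, OF _ _ _ c] ab by cases auto
  qed
  have no_two_zeros: False if "x \<in> {0..1}" "y \<in> {0..1}" "\<phi> x = 0" "\<phi> y = 0" "x < y" for x y
  proof -
    have inner: "x \<in> {0<..<1}" "y \<in> {0<..<1}"
      using that ends by (auto simp: less_le)
    from ends consider "\<phi> 1 < 0" | "\<phi> 0 < 0" by (auto simp: mult_less_0_iff)
    then show False
    proof cases
      case 1
      define z where "z = (y + 1) / 2"
      have "\<phi> z > 0"
        using strictly_convex_on_pos_beyond_zeros[OF convex, of x y z] that inner by (auto simp: z_def)
      then obtain w where "w \<in> {z..1}" "\<phi> w = 0"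
        using IVT[of z 1] 1 inner by (auto simp: z_def mult_le_0_iff)
      with 1 have "w \<in> {y<..<1}" by (cases "w = 1") (auto simp: z_def)
      then show False
        using strictly_convex_on_pos_beyond_zeros[OF convex, of x y w] that inner \<open>\<phi> w = 0\<close> by auto
    next
      case 2
      define z where "z = x / 2"
      have "\<phi> z > 0"
        using strictly_convex_on_pos_beyond_zeros[OF convex, of y x z] that inner by (auto simp: z_def)
      then obtain w where "w \<in> {0..z}" "\<phi> w = 0"
        using IVT[of 0 z] 2 inner by (auto simp: z_def mult_le_0_iff)
      with 2 have "w \<in> {0<..<x}" by (cases "w = 0") (auto simp: z_def)
      then show False
        using strictly_convex_on_pos_beyond_zeros[OF convex, of y x w] that inner \<open>\<phi> w = 0\<close> by auto
    qed
  qed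
  show ?thesis
    using no_two_zeros[of x y] no_two_zeros[of y x] assms(4-) by (cases x y rule: linorder_cases) auto
qed

section \<open>The drift function\<close>

lemma erw_g_affine: "erw_g p f x = (2 * p - 1) * f x + (1 - p)"
  by (simp add: erw_g_def algebra_simps)

lemma erw_g_strict_bounds:
  assumes "0 < p" "p < 1" "0 \<le> f x" "f x \<le> 1"
  shows "0 < erw_g p f x" "erw_g p f x < 1"
proof -
  have "0 < p * f x + (1 - p) * (1 - f x)"
    using assms by (cases "f x = 0") (auto intro: add_pos_nonneg add_nonneg_pos)
  then show "0 < erw_g p f x" by (simp add: erw_g_def)
  have "0 < p * (1 - f x) + (1 - p) * f x"
    using assms by (cases "f x = 1") (auto intro: add_pos_nonneg add_nonneg_pos)
  then show "erw_g p f x < 1" by (simp add: erw_g_def algebra_simps)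
qed

lemma continuous_on_erw_g: "continuous_on S f \<Longrightarrow> continuous_on S (erw_g p f)"
  unfolding erw_g_def by (intro continuous_intros)

lemma erw_g_strict_antimono_on:
  assumes "(1/2 < p \<and> strict_antimono_on S f) \<or> (p < 1/2 \<and> strict_mono_on S f)"
  shows "strict_antimono_on S (erw_g p f)"
  unfolding monotone_on_def
proof (intro ballI impI)
  fix x y assume "x \<in> S" "y \<in> S" "x < y"
  with assms have "(2 * p - 1) * f y < (2 * p - 1) * f x"
    by (auto intro: mult_strict_left_mono mult_strict_left_mono_neg dest: monotone_onD)
  then show "erw_g p f y < erw_g p f x" by (simp add: erw_g_affine)
qed

lemma erw_g_lipschitz:
  assumes "\<bar>f x - f y\<bar> \<le> c * \<bar>x - y\<bar>"
  shows "\<bar>erw_g p f x - erw_g p f y\<bar> \<le> c * \<bar>2 * p - 1\<bar> * \<bar>x - y\<bar>"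
proof -
  have "\<bar>erw_g p f x - erw_g p f y\<bar> = \<bar>2 * p - 1\<bar> * \<bar>f x - f y\<bar>"
    by (simp add: erw_g_affine abs_mult[symmetric] algebra_simps)
  also have "\<dots> \<le> \<bar>2 * p - 1\<bar> * (c * \<bar>x - y\<bar>)" using assms by (simp add: mult_left_mono)
  finally show ?thesis by (simp add: algebra_simps)
qed

lemma erw_g_minus_id_strictly_convex_or_concave:
  assumes "p \<noteq> 1/2" "strictly_convex_on S f \<or> strictly_convex_on S (\<lambda>x. - f x)"
  shows "strictly_convex_on S (\<lambda>x. erw_g p f x - x) \<or> strictly_convex_on S (\<lambda>x. - (erw_g p f x - x))"
proof -
  have h: "(\<lambda>x. erw_g p f x - x) = (\<lambda>x. (2 * p - 1) * f x + (-1) * x + (1 - p))"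
    "(\<lambda>x. erw_g p f x - x) = (\<lambda>x. (1 - 2 * p) * (- f x) + (-1) * x + (1 - p))"
    "(\<lambda>x. - (erw_g p f x - x)) = (\<lambda>x. (1 - 2 * p) * f x + 1 * x + (p - 1))"
    "(\<lambda>x. - (erw_g p f x - x)) = (\<lambda>x. (2 * p - 1) * (- f x) + 1 * x + (p - 1))"
    by (simp_all add: erw_g_affine fun_eq_iff algebra_simps)
  from assms(1) consider "2 * p - 1 > 0" | "1 - 2 * p > 0" by fastforce
  then show ?thesis
  proof cases
    case 1
    with assms(2) show ?thesis
      using strictly_convex_on_affine[of S f "2 * p - 1" "-1" "1 - p"]
        strictly_convex_on_affine[of S "\<lambda>x. - f x" "2 * p - 1" 1 "p - 1"]
      unfolding h(1,4) by blast
  next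
    case 2
    with assms(2) show ?thesis
      using strictly_convex_on_affine[of S "\<lambda>x. - f x" "1 - 2 * p" "-1" "1 - p"]
        strictly_convex_on_affine[of S f "1 - 2 * p" 1 "p - 1"]
      unfolding h(2,3) by blast
  qed
qed

lemma erw_g_fixpoint_unique_convex:
  assumes p: "p \<in> {0<..<1}" "p \<noteq> 1/2" and f_range: "f ` {0..1} \<subseteq> {0..1}"
    and f_cont: "continuous_on {0..1} f"
    and convex: "strictly_convex_on {0<..<1} f \<or> strictly_convex_on {0<..<1} (\<lambda>x. - f x)"
    and x: "x \<in> {0..1}" "erw_g p f x = x" and y: "y \<in> {0..1}" "erw_g p f y = y"
  shows "x = y"
proof -
  let ?h = "\<lambda>x. erw_g p f x - x"
  have cont: "continuous_on {0..1} ?h" "continuous_on {0..1} (\<lambda>x. - ?h x)"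
    by (intro continuous_intros continuous_on_erw_g f_cont)+
  have "f 0 \<in> {0..1}" "f 1 \<in> {0..1}" using f_range by (auto simp: image_subset_iff)
  then have "0 < ?h 0" "?h 1 < 0" using erw_g_strict_bounds[of p f] p by auto
  then have ends: "?h 0 * ?h 1 < 0" "(- ?h 0) * (- ?h 1) < 0" by (simp_all add: mult_pos_neg)
  from erw_g_minus_id_strictly_convex_or_concave[OF p(2) convex] show ?thesis
  proof
    assume "strictly_convex_on {0<..<1} ?h"
    from strictly_convex_on_unit_interval_zero_unique[OF cont(1) this ends(1)] show ?thesis
      using x y by simp
  next
    assume "strictly_convex_on {0<..<1} (\<lambda>x. - ?h x)"
    from strictly_convex_on_unit_interval_zero_unique[OF cont(2) this ends(2)] show ?thesis
      using x y by simp
  qed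
qed

lemma erw_g_ex1_fixpoint:
  assumes p: "p \<in> {0<..<1}" "p \<noteq> 1/2" and f_range: "f ` {0..1} \<subseteq> {0..1}"
    and f_cont: "continuous_on {0..1} f"
    and G: "(\<exists>f'. C1_01 f f' \<and>
          ((1/2 < p \<and> strict_antimono_on {0..1} f) \<or> (p < 1/2 \<and> strict_mono_on {0..1} f)))
       \<or> (C2_01 f \<and> (strictly_convex_on {0<..<1} f \<or> strictly_convex_on {0<..<1} (\<lambda>x. - f x)))
       \<or> (\<exists>c. (\<forall>x\<in>{0..1}. \<forall>y\<in>{0..1}. \<bar>f x - f y\<bar> \<le> c * \<bar>x - y\<bar>) \<and> c * \<bar>2 * p - 1\<bar> < 1)"
  shows "\<exists>!x. x \<in> {0..1} \<and> erw_g p f x = x"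
proof -
  have unique: "x = y" if x: "x \<in> {0..1}" "erw_g p f x = x" and y: "y \<in> {0..1}" "erw_g p f y = y" for x y
  proof -
    from G consider
        (monotone) "(1/2 < p \<and> strict_antimono_on {0..1} f) \<or> (p < 1/2 \<and> strict_mono_on {0..1} f)"
      | (convex) "strictly_convex_on {0<..<1} f \<or> strictly_convex_on {0<..<1} (\<lambda>x. - f x)"
      | (contraction) c where "\<forall>x\<in>{0..1}. \<forall>y\<in>{0..1}. \<bar>f x - f y\<bar> \<le> c * \<bar>x - y\<bar>"
          "c * \<bar>2 * p - 1\<bar> < 1"
      by blast
    then show ?thesis
    proof cases
      case monotone
      then show ?thesis
        using strict_antimono_on_fixpoint_unique[OF erw_g_strict_antimono_on] x y by blast
    next
      case convex
      then show ?thesis by (rule erw_g_fixpoint_unique_convex[OF p f_range f_cont _ x y])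
    next
      case contraction
      have "\<bar>erw_g p f x - erw_g p f y\<bar> \<le> c * \<bar>2 * p - 1\<bar> * \<bar>x - y\<bar>"
        using contraction(1) x y by (intro erw_g_lipschitz) auto
      from contraction_fixpoint_unique[OF this contraction(2)] show ?thesis using x y by simp
    qed
  qed
  have "f 0 \<in> {0..1}" "f 1 \<in> {0..1}" using f_range by (auto simp: image_subset_iff)
  then have "0 \<le> erw_g p f 0" "erw_g p f 1 \<le> 1" using erw_g_strict_bounds[of p f] p by (auto intro: less_imp_le)
  with fixpoint_exists_unit_interval[OF continuous_on_erw_g[OF f_cont]] unique show ?thesis by blast
qed

section \<open>A deterministic averaging recursion\<close>

lemma continuous_on_compact_neg_bounded_away:
  fixes h :: "'a::topological_space \<Rightarrow> real"
  assumes "compact K" "continuous_on K h" "\<forall>x\<in>K. h x < 0"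
  shows "\<exists>\<delta>>0. \<forall>x\<in>K. h x \<le> - \<delta>"
proof (cases "K = {}")
  case False
  then obtain x0 where "x0 \<in> K" "\<forall>x\<in>K. h x \<le> h x0"
    using continuous_attains_sup[OF assms(1) _ assms(2)] by blast
  with assms(3) show ?thesis by (intro exI[of _ "- h x0"]) auto
qed (auto intro: exI[of _ 1])

lemma ln_Suc_Suc_le: "ln (real (Suc (Suc n))) \<le> ln (real (Suc n)) + 1 / real (Suc n)"
proof -
  have "1 + 1 / real (Suc n) = real (Suc (Suc n)) / real (Suc n)" by (simp add: field_simps)
  then have "ln (real (Suc (Suc n))) = ln (real (Suc n)) + ln (1 + 1 / real (Suc n))"
    by (simp add: ln_div del: of_nat_Suc)
  also have "ln (1 + 1 / real (Suc n)) \<le> 1 / real (Suc n)" by (rule ln_add_one_self_le_self) simp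
  finally show ?thesis by simp
qed

text \<open>The pushes d/(n+1) add up to infinity, like d ln n.\<close>
lemma exists_le_if_drift_down:
  fixes v :: "nat \<Rightarrow> real"
  assumes "d > 0" and drift: "\<forall>n\<ge>N. c < v n \<longrightarrow> v (Suc n) \<le> v n - d / real (Suc n)"
  shows "\<exists>n\<ge>N. v n \<le> c"
proof (rule ccontr)
  assume "\<not> (\<exists>n\<ge>N. v n \<le> c)"
  then have above: "c < v n" if "n \<ge> N" for n using that by force
  have telescoped: "v n + d * ln (real (Suc n)) \<le> v N + d * ln (real (Suc N))" if "n \<ge> N" for n
    using that
  proof (induction n rule: dec_induct)
    case (step n)
    have "d * ln (real (Suc (Suc n))) \<le> d * ln (real (Suc n)) + d / real (Suc n)"
      using mult_left_mono[OF ln_Suc_Suc_le[of n], of d] \<open>d > 0\<close> by (simp add: algebra_simps)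
    with drift above step show ?case by force
  qed simp
  obtain j :: nat where "exp ((v N + d * ln (real (Suc N)) - c) / d) < real j"
    using reals_Archimedean2 by blast
  then have "(v N + d * ln (real (Suc N)) - c) / d < ln (real (Suc (N + j)))"
    by (subst ln_exp[symmetric], subst ln_less_cancel_iff) auto
  then have "v N + d * ln (real (Suc N)) - c < d * ln (real (Suc (N + j)))"
    using \<open>d > 0\<close> by (simp add: field_simps)
  then have "v (N + j) < c" using telescoped[of "N + j"] by simp
  with above[of "N + j"] show False by simp
qed

lemma eventually_le_if_drift_down:
  fixes v :: "nat \<Rightarrow> real"
  assumes "d > 0" "\<epsilon> \<ge> 0"
    and drift: "\<forall>n\<ge>N. c < v n \<longrightarrow> v (Suc n) \<le> v n - d / real (Suc n)"
    and small_steps: "\<forall>n\<ge>N. v (Suc n) \<le> v n + \<epsilon>"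
  shows "eventually (\<lambda>n. v n \<le> c + \<epsilon>) sequentially"
proof -
  obtain n0 where "n0 \<ge> N" "v n0 \<le> c" using exists_le_if_drift_down[OF \<open>d > 0\<close> drift] by blast
  have "v n \<le> c + \<epsilon>" if "n \<ge> n0" for n
    using that
  proof (induction n rule: dec_induct)
    case (step n)
    have "d / real (Suc n) > 0" using \<open>d > 0\<close> by simp
    have "n \<ge> N" using step.hyps \<open>n0 \<ge> N\<close> by simp
    with step.IH show ?case
      using drift small_steps \<open>d / real (Suc n) > 0\<close> by (cases "c < v n") force+
  qed (use \<open>v n0 \<le> c\<close> \<open>\<epsilon> \<ge> 0\<close> in simp)
  then show ?thesis unfolding eventually_sequentially by blast
qed

text \<open>Written as v (n+1) = v n + (g (y n) + e n - v n) / (n+1), the recursion pushes v down by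
  a fixed multiple of 1/(n+1) as long as v n > xs + \<epsilon>, since x - g x is bounded away from 0
  on [xs + \<epsilon>/2, 1].\<close>
lemma average_recursion_eventually_le:
  fixes g :: "real \<Rightarrow> real" and y v e :: "nat \<Rightarrow> real"
  assumes cont: "continuous_on {0..1} g" and range: "\<forall>x\<in>{0..1}. g x \<in> {0..1}"
    and below: "\<forall>x\<in>{0..1}. xs < x \<longrightarrow> g x < x"
    and y: "\<forall>n. y n \<in> {0..1}"
    and rec: "\<forall>n\<ge>1. real (Suc n) * v (Suc n) = real n * v n + g (y n) + e n"
    and e: "e \<longlonglongrightarrow> 0" and yv: "(\<lambda>n. y n - v n) \<longlonglongrightarrow> 0" and "\<epsilon> > 0"
  shows "eventually (\<lambda>n. v n \<le> xs + 2 * \<epsilon>) sequentially"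
proof -
  define K where "K = {max 0 (xs + \<epsilon>/2)..1}"
  have "compact K" by (simp add: K_def)
  moreover have "continuous_on K (\<lambda>x. g x - x)"
    by (intro continuous_intros continuous_on_subset[OF cont]) (auto simp: K_def)
  moreover have "\<forall>x\<in>K. g x - x < 0" using below \<open>\<epsilon> > 0\<close> by (auto simp: K_def)
  ultimately obtain \<delta> where "\<delta> > 0" and \<delta>: "\<forall>x\<in>K. g x - x \<le> - \<delta>"
    using continuous_on_compact_neg_bounded_away by blast
  define \<eta> where "\<eta> = min 1 (min (\<epsilon>/2) (\<delta>/4))"
  have "\<eta> > 0" using \<open>\<epsilon> > 0\<close> \<open>\<delta> > 0\<close> by (simp add: \<eta>_def)
  have "eventually (\<lambda>n. \<bar>e n\<bar> < \<eta> \<and> \<bar>y n - v n\<bar> < \<eta> \<and> 3 / \<epsilon> \<le> real n \<and> 1 \<le> n) sequentially"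
    using e yv \<open>\<eta> > 0\<close> unfolding tendsto_iff dist_real_def
    by (auto intro!: eventually_conj eventually_ge_at_top simp: real_nat_ceiling_ge
        intro: eventually_mono[OF eventually_ge_at_top[of "nat \<lceil>3 / \<epsilon>\<rceil>"]])
  then obtain N where N: "\<And>n. n \<ge> N \<Longrightarrow> \<bar>e n\<bar> < \<eta> \<and> \<bar>y n - v n\<bar> < \<eta> \<and> 3 / \<epsilon> \<le> real n \<and> 1 \<le> n"
    unfolding eventually_sequentially by blast
  have next_v: "v (Suc n) = v n + (g (y n) + e n - v n) / real (Suc n)" if "n \<ge> N" for n
    using rec N[OF that] by (auto simp: field_simps)
  have "eventually (\<lambda>n. v n \<le> (xs + \<epsilon>) + \<epsilon>) sequentially"
  proof (rule eventually_le_if_drift_down[of "\<delta>/2"])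
    show "\<forall>n\<ge>N. xs + \<epsilon> < v n \<longrightarrow> v (Suc n) \<le> v n - \<delta> / 2 / real (Suc n)"
    proof (intro allI impI)
      fix n assume "n \<ge> N" "xs + \<epsilon> < v n"
      have "\<bar>y n - v n\<bar> < \<epsilon>/2" using N[OF \<open>n \<ge> N\<close>] by (simp add: \<eta>_def)
      with \<open>xs + \<epsilon> < v n\<close> have "xs + \<epsilon>/2 \<le> y n" by linarith
      with y have "y n \<in> K" by (auto simp: K_def)
      then have "g (y n) - y n \<le> - \<delta>" using \<delta> by blast
      moreover have "\<eta> \<le> \<delta>/4" by (simp add: \<eta>_def)
      ultimately have "g (y n) + e n - v n \<le> - \<delta> / 2" using N[OF \<open>n \<ge> N\<close>] by linarith
      then have "(g (y n) + e n - v n) / real (Suc n) \<le> (- \<delta> / 2) / real (Suc n)"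
        by (intro divide_right_mono) auto
      then show "v (Suc n) \<le> v n - \<delta> / 2 / real (Suc n)"
        using next_v[OF \<open>n \<ge> N\<close>] by simp
    qed
    show "\<forall>n\<ge>N. v (Suc n) \<le> v n + \<epsilon>"
    proof (intro allI impI)
      fix n assume "n \<ge> N"
      have "g (y n) \<le> 1" using range y by (meson atLeastAtMost_iff)
      moreover have "\<eta> \<le> 1" by (simp add: \<eta>_def)
      ultimately have "g (y n) + e n - v n \<le> 3" using N[OF \<open>n \<ge> N\<close>] y[rule_format, of n] by auto
      then have "(g (y n) + e n - v n) / real (Suc n) \<le> 3 / real (Suc n)"
        by (intro divide_right_mono) auto
      also have "\<dots> \<le> \<epsilon>" using N[OF \<open>n \<ge> N\<close>] \<open>\<epsilon> > 0\<close> by (simp add: field_simps)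
      finally show "v (Suc n) \<le> v n + \<epsilon>" using next_v[OF \<open>n \<ge> N\<close>] by simp
    qed
  qed (use \<open>\<delta> > 0\<close> \<open>\<epsilon> > 0\<close> in auto)
  then show ?thesis by (simp add: algebra_simps)
qed

lemma average_recursion_tendsto:
  fixes g :: "real \<Rightarrow> real" and y v e :: "nat \<Rightarrow> real"
  assumes cont: "continuous_on {0..1} g" and range: "\<forall>x\<in>{0..1}. g x \<in> {0..1}"
    and attracting: "\<forall>x\<in>{0..1}. x \<noteq> xs \<longrightarrow> (g x - x) * (x - xs) < 0"
    and y: "\<forall>n. y n \<in> {0..1}"
    and rec: "\<forall>n\<ge>1. real (Suc n) * v (Suc n) = real n * v n + g (y n) + e n"
    and e: "e \<longlonglongrightarrow> 0" and yv: "(\<lambda>n. y n - v n) \<longlonglongrightarrow> 0"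
  shows "y \<longlonglongrightarrow> xs"
proof -
  have upper: "eventually (\<lambda>n. v n \<le> xs + 2 * \<epsilon>) sequentially" if "\<epsilon> > 0" for \<epsilon>
  proof (rule average_recursion_eventually_le[OF cont range _ y rec e yv that])
    show "\<forall>x\<in>{0..1}. xs < x \<longrightarrow> g x < x"
      using attracting by (auto simp: mult_less_0_iff)
  qed
  text \<open>The reflection x \<mapsto> 1 - x turns lower bounds into upper bounds.\<close>
  have lower: "eventually (\<lambda>n. 1 - v n \<le> (1 - xs) + 2 * \<epsilon>) sequentially" if "\<epsilon> > 0" for \<epsilon>
  proof (rule average_recursion_eventually_le[where g = "\<lambda>x. 1 - g (1 - x)" and y = "\<lambda>n. 1 - y n"
        and e = "\<lambda>n. - e n"])
    show "continuous_on {0..1} (\<lambda>x. 1 - g (1 - x))"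
      by (intro continuous_intros continuous_on_compose2[OF cont]) auto
    show "\<forall>x\<in>{0..1}. 1 - xs < x \<longrightarrow> 1 - g (1 - x) < x"
    proof (intro ballI impI)
      fix x :: real assume "x \<in> {0..1}" "1 - xs < x"
      then have "(g (1 - x) - (1 - x)) * ((1 - x) - xs) < 0" using attracting by auto
      with \<open>1 - xs < x\<close> show "1 - g (1 - x) < x" by (auto simp: mult_less_0_iff)
    qed
    show "(\<lambda>n. - e n) \<longlonglongrightarrow> 0" using tendsto_minus[OF e] by simp
    show "(\<lambda>n. (1 - y n) - (1 - v n)) \<longlonglongrightarrow> 0" using tendsto_minus[OF yv] by simp
  qed (use range y rec that in \<open>auto simp: algebra_simps\<close>)
  have "v \<longlonglongrightarrow> xs"
    unfolding tendsto_iff dist_real_def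
  proof (intro allI impI)
    fix r :: real assume "r > 0"
    then have "r/3 > 0" by simp
    from eventually_conj[OF upper[OF this] lower[OF this]]
    show "eventually (\<lambda>n. \<bar>v n - xs\<bar> < r) sequentially"
      by eventually_elim (use \<open>r > 0\<close> in auto)
  qed
  from tendsto_add[OF this yv] show ?thesis by simp
qed

section \<open>A strong law for bounded orthogonal increments\<close>

lemma power2_add_bounded_le:
  fixes s z :: real assumes "\<bar>z\<bar> \<le> 1"
  shows "(s + z) ^ 2 \<le> s ^ 2 + 2 * (s * z) + 1"
proof -
  have "\<bar>z\<bar> ^ 2 \<le> 1" using assms by (intro power_le_one) auto
  then have "z ^ 2 \<le> 1" by simp
  then show ?thesis by (simp add: power2_sum)
qed

lemma power4_add_bounded_le:
  fixes s z :: real assumes "\<bar>z\<bar> \<le> 1"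
  shows "(s + z) ^ 4 \<le> s ^ 4 + 4 * (s ^ 3 * z) + 8 * s ^ 2 + 3"
proof -
  have z: "\<bar>z\<bar> ^ m \<le> 1" for m :: nat using assms by (intro power_le_one) auto
  have "s ^ 2 * z ^ 2 \<le> s ^ 2" using z[of 2] by (simp add: power_abs mult_left_le)
  moreover have "s * z ^ 3 \<le> \<bar>s\<bar> * \<bar>z\<bar> ^ 3" by (metis abs_ge_self abs_mult power_abs)
  then have "s * z ^ 3 \<le> \<bar>s\<bar>" using mult_left_le[OF z[of 3], of "\<bar>s\<bar>"] by simp
  moreover have "2 * \<bar>s\<bar> \<le> s ^ 2 + 1"
    using sum_squares_bound[of "\<bar>s\<bar>" 1] by simp
  moreover have "z ^ 4 \<le> 1" using z[of 4] by (simp add: power_abs)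
  moreover have "(s + z) ^ 4 = s ^ 4 + 4 * (s ^ 3 * z) + 6 * (s ^ 2 * z ^ 2) + 4 * (s * z ^ 3) + z ^ 4"
    by algebra
  ultimately show ?thesis by linarith
qed

context prob_space
begin

lemma integrable_bounded:
  fixes h :: "'a \<Rightarrow> real"
  assumes "h \<in> borel_measurable M" "\<And>\<omega>. \<omega> \<in> space M \<Longrightarrow> \<bar>h \<omega>\<bar> \<le> C"
  shows "integrable M h"
  using assms by (intro integrable_const_bound[where B = C]) auto

context
  fixes \<zeta> :: "nat \<Rightarrow> 'a \<Rightarrow> real"
  assumes increment_measurable: "\<And>j. \<zeta> j \<in> borel_measurable M"
    and increment_bounded: "\<And>j \<omega>. \<omega> \<in> space M \<Longrightarrow> \<bar>\<zeta> j \<omega>\<bar> \<le> 1"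
begin

lemma integrable_partial_sum_power_times:
  "integrable M (\<lambda>\<omega>. (\<Sum>j<n. \<zeta> j \<omega>) ^ m * \<zeta> n \<omega> ^ l)"
proof (rule integrable_bounded[where C = "real n ^ m"])
  fix \<omega> assume "\<omega> \<in> space M"
  have "\<bar>\<Sum>j<n. \<zeta> j \<omega>\<bar> \<le> (\<Sum>j<n. 1)"
    using increment_bounded[OF \<open>\<omega> \<in> space M\<close>] by (intro order_trans[OF sum_abs] sum_mono) auto
  then have "\<bar>\<Sum>j<n. \<zeta> j \<omega>\<bar> ^ m * \<bar>\<zeta> n \<omega>\<bar> ^ l \<le> real n ^ m * 1"
    using increment_bounded \<open>\<omega> \<in> space M\<close> by (intro mult_mono power_mono power_le_one) auto
  then show "\<bar>(\<Sum>j<n. \<zeta> j \<omega>) ^ m * \<zeta> n \<omega> ^ l\<bar> \<le> real n ^ m" by (simp add: abs_mult power_abs)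
qed (use increment_measurable in measurable)

lemma integrable_partial_sum_power: "integrable M (\<lambda>\<omega>. (\<Sum>j<n. \<zeta> j \<omega>) ^ m)"
  using integrable_partial_sum_power_times[of n m 0] by simp

lemma integrable_partial_sum_odd_times:
  "integrable M (\<lambda>\<omega>. (\<Sum>j<n. \<zeta> j \<omega>) * \<zeta> n \<omega>)" "integrable M (\<lambda>\<omega>. (\<Sum>j<n. \<zeta> j \<omega>) ^ 3 * \<zeta> n \<omega>)"
  using integrable_partial_sum_power_times[of n 1 1] integrable_partial_sum_power_times[of n 3 1] by simp_all

lemmas integrable_moment_terms = integrable_partial_sum_power integrable_partial_sum_odd_times
  Bochner_Integration.integrable_add integrable_mult_right integrable_const

text \<open>In the expansion of (S + \<zeta> n)^m, with S the partial sum up to n, orthogonality removes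
  the only term that is not controlled by lower moments.\<close>
lemma second_moment_step:
  assumes "(\<integral>\<omega>. (\<Sum>j<n. \<zeta> j \<omega>) * \<zeta> n \<omega> \<partial>M) = 0"
  shows "(\<integral>\<omega>. (\<Sum>j<Suc n. \<zeta> j \<omega>) ^ 2 \<partial>M) \<le> (\<integral>\<omega>. (\<Sum>j<n. \<zeta> j \<omega>) ^ 2 \<partial>M) + 1"
proof -
  have "(\<integral>\<omega>. (\<Sum>j<Suc n. \<zeta> j \<omega>) ^ 2 \<partial>M)
      \<le> (\<integral>\<omega>. (\<Sum>j<n. \<zeta> j \<omega>) ^ 2 + 2 * ((\<Sum>j<n. \<zeta> j \<omega>) * \<zeta> n \<omega>) + 1 \<partial>M)"
    using power2_add_bounded_le[OF increment_bounded]
    by (intro integral_mono integrable_moment_terms) auto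
  also have "\<dots> = (\<integral>\<omega>. (\<Sum>j<n. \<zeta> j \<omega>) ^ 2 \<partial>M) + 2 * (\<integral>\<omega>. (\<Sum>j<n. \<zeta> j \<omega>) * \<zeta> n \<omega> \<partial>M) + 1"
    by (subst Bochner_Integration.integral_add Bochner_Integration.integral_mult_right;
        (intro integrable_moment_terms)?)+ (simp add: prob_space)
  finally show ?thesis using assms by simp
qed

lemma fourth_moment_step:
  assumes "(\<integral>\<omega>. (\<Sum>j<n. \<zeta> j \<omega>) ^ 3 * \<zeta> n \<omega> \<partial>M) = 0"
  shows "(\<integral>\<omega>. (\<Sum>j<Suc n. \<zeta> j \<omega>) ^ 4 \<partial>M)
           \<le> (\<integral>\<omega>. (\<Sum>j<n. \<zeta> j \<omega>) ^ 4 \<partial>M) + 8 * (\<integral>\<omega>. (\<Sum>j<n. \<zeta> j \<omega>) ^ 2 \<partial>M) + 3"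
proof -
  have "(\<integral>\<omega>. (\<Sum>j<Suc n. \<zeta> j \<omega>) ^ 4 \<partial>M)
      \<le> (\<integral>\<omega>. (\<Sum>j<n. \<zeta> j \<omega>) ^ 4 + 4 * ((\<Sum>j<n. \<zeta> j \<omega>) ^ 3 * \<zeta> n \<omega>)
            + 8 * (\<Sum>j<n. \<zeta> j \<omega>) ^ 2 + 3 \<partial>M)"
    using power4_add_bounded_le[OF increment_bounded]
    by (intro integral_mono integrable_moment_terms) auto
  also have "\<dots> = (\<integral>\<omega>. (\<Sum>j<n. \<zeta> j \<omega>) ^ 4 \<partial>M) + 4 * (\<integral>\<omega>. (\<Sum>j<n. \<zeta> j \<omega>) ^ 3 * \<zeta> n \<omega> \<partial>M)
      + 8 * (\<integral>\<omega>. (\<Sum>j<n. \<zeta> j \<omega>) ^ 2 \<partial>M) + 3"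
    by (subst Bochner_Integration.integral_add Bochner_Integration.integral_mult_right;
        (intro integrable_moment_terms)?)+ (simp add: prob_space)
  finally show ?thesis using assms by simp
qed

lemma moments_bound_orthogonal_increments:
  assumes "\<And>n. (\<integral>\<omega>. (\<Sum>j<n. \<zeta> j \<omega>) * \<zeta> n \<omega> \<partial>M) = 0"
    and "\<And>n. (\<integral>\<omega>. (\<Sum>j<n. \<zeta> j \<omega>) ^ 3 * \<zeta> n \<omega> \<partial>M) = 0"
  shows "(\<integral>\<omega>. (\<Sum>j<n. \<zeta> j \<omega>) ^ 2 \<partial>M) \<le> real n \<and> (\<integral>\<omega>. (\<Sum>j<n. \<zeta> j \<omega>) ^ 4 \<partial>M) \<le> 8 * real n ^ 2"
proof (induction n)
  case (Suc n)
  have "(\<integral>\<omega>. (\<Sum>j<Suc n. \<zeta> j \<omega>) ^ 4 \<partial>M) \<le> 8 * real n ^ 2 + 8 * real n + 3"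
    using fourth_moment_step[of n, OF assms(2)] Suc by linarith
  also have "\<dots> \<le> 8 * real (Suc n) ^ 2" by (simp add: power2_eq_square algebra_simps)
  finally show ?case using second_moment_step[of n, OF assms(1)] Suc by simp
qed simp

end

lemma AE_eventually_abs_less_if_fourth_moment_bound:
  fixes S :: "nat \<Rightarrow> 'a \<Rightarrow> real"
  assumes meas: "\<And>n. S n \<in> borel_measurable M"
    and int: "\<And>n. integrable M (\<lambda>\<omega>. S n \<omega> ^ 4)"
    and moment: "\<And>n. (\<integral>\<omega>. S n \<omega> ^ 4 \<partial>M) \<le> C * real n ^ 2"
    and "\<epsilon> > 0"
  shows "AE \<omega> in M. eventually (\<lambda>n. \<bar>S n \<omega>\<bar> < \<epsilon> * real n) sequentially"
proof -
  define A where "A n = {\<omega>\<in>space M. (\<epsilon> * real n) ^ 4 \<le> S n \<omega> ^ 4}" for n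
  have A_sets: "A n \<in> sets M" for n unfolding A_def using meas by measurable
  have A_small: "measure M (A n) \<le> C / \<epsilon> ^ 4 * inverse (real n ^ 2)" if "n \<ge> 1" for n
  proof -
    have pos: "(\<epsilon> * real n) ^ 4 > 0" using \<open>\<epsilon> > 0\<close> that by simp
    have "measure M (A n) \<le> (\<integral>\<omega>. S n \<omega> ^ 4 \<partial>M) / (\<epsilon> * real n) ^ 4"
      unfolding A_def
      by (rule integral_Markov_inequality_measure[OF int sets.top _ pos]) (simp add: zero_le_even_power)
    also have "\<dots> \<le> C * real n ^ 2 / (\<epsilon> * real n) ^ 4"
      using moment pos by (intro divide_right_mono) auto
    also have "\<dots> = C / \<epsilon> ^ 4 * inverse (real n ^ 2)"
      using that \<open>\<epsilon> > 0\<close> by (simp add: field_simps eval_nat_numeral)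
    finally show ?thesis .
  qed
  have "summable (\<lambda>n. C / \<epsilon> ^ 4 * inverse (real n ^ 2))"
    by (intro summable_mult inverse_power_summable) simp
  then have "summable (\<lambda>n. measure M (A n))"
    by (rule summable_comparison_test'[where N = 1]) (use A_small in auto)
  then have "AE \<omega> in M. eventually (\<lambda>n. \<omega> \<in> space M - A n) sequentially"
    by (intro borel_cantelli_AE1 A_sets) (simp_all add: less_top[symmetric])
  then show ?thesis
  proof (rule AE_mp, intro AE_I2 impI)
    fix \<omega> assume "\<omega> \<in> space M" "eventually (\<lambda>n. \<omega> \<in> space M - A n) sequentially"
    then show "eventually (\<lambda>n. \<bar>S n \<omega>\<bar> < \<epsilon> * real n) sequentially"
    proof (elim eventually_mono)
      fix n assume "\<omega> \<in> space M - A n"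
      then have "\<bar>S n \<omega>\<bar> ^ 4 < (\<epsilon> * real n) ^ 4" by (auto simp: A_def power_even_abs)
      then show "\<bar>S n \<omega>\<bar> < \<epsilon> * real n"
        by (rule power_less_imp_less_base) (use \<open>\<epsilon> > 0\<close> in simp)
    qed
  qed
qed

lemma AE_tendsto_zero_if_fourth_moment_bound:
  fixes S :: "nat \<Rightarrow> 'a \<Rightarrow> real"
  assumes meas: "\<And>n. S n \<in> borel_measurable M"
    and int: "\<And>n. integrable M (\<lambda>\<omega>. S n \<omega> ^ 4)"
    and moment: "\<And>n. (\<integral>\<omega>. S n \<omega> ^ 4 \<partial>M) \<le> C * real n ^ 2"
  shows "AE \<omega> in M. (\<lambda>n. S n \<omega> / real n) \<longlonglongrightarrow> 0"
proof -
  have "AE \<omega> in M. \<forall>m. eventually (\<lambda>n. \<bar>S n \<omega>\<bar> < 1 / real (Suc m) * real n) sequentially"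
    unfolding AE_all_countable
    by (intro allI AE_eventually_abs_less_if_fourth_moment_bound[OF meas int moment]) simp
  then show ?thesis
  proof (rule AE_mp, intro AE_I2 impI)
    fix \<omega> assume H: "\<forall>m. eventually (\<lambda>n. \<bar>S n \<omega>\<bar> < 1 / real (Suc m) * real n) sequentially"
    show "(\<lambda>n. S n \<omega> / real n) \<longlonglongrightarrow> 0"
      unfolding tendsto_iff dist_real_def
    proof (intro allI impI)
      fix r :: real assume "r > 0"
      then obtain m where m: "1 / real (Suc m) < r"
        using nat_approx_posE by blast
      from H[rule_format, of m] eventually_gt_at_top[of 0]
      show "eventually (\<lambda>n. \<bar>S n \<omega> / real n - 0\<bar> < r) sequentially"
      proof eventually_elim
        case (elim n)
        then have "\<bar>S n \<omega>\<bar> / real n < 1 / real (Suc m)" by (simp add: field_simps)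
        with m show ?case by simp
      qed
    qed
  qed
qed

lemma AE_tendsto_zero_orthogonal_increments:
  fixes \<zeta> :: "nat \<Rightarrow> 'a \<Rightarrow> real"
  assumes meas: "\<And>j. \<zeta> j \<in> borel_measurable M"
    and bounded: "\<And>j \<omega>. \<omega> \<in> space M \<Longrightarrow> \<bar>\<zeta> j \<omega>\<bar> \<le> 1"
    and orth1: "\<And>n. (\<integral>\<omega>. (\<Sum>j<n. \<zeta> j \<omega>) * \<zeta> n \<omega> \<partial>M) = 0"
    and orth3: "\<And>n. (\<integral>\<omega>. (\<Sum>j<n. \<zeta> j \<omega>) ^ 3 * \<zeta> n \<omega> \<partial>M) = 0"
  shows "AE \<omega> in M. (\<lambda>n. (\<Sum>j<n. \<zeta> j \<omega>) / real n) \<longlonglongrightarrow> 0"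
proof (rule AE_tendsto_zero_if_fourth_moment_bound[where C = 8])
  show "(\<lambda>\<omega>. \<Sum>j<n. \<zeta> j \<omega>) \<in> borel_measurable M" for n using meas by measurable
  show "integrable M (\<lambda>\<omega>. (\<Sum>j<n. \<zeta> j \<omega>) ^ 4)" for n
    by (rule integrable_partial_sum_power[OF meas bounded])
  show "(\<integral>\<omega>. (\<Sum>j<n. \<zeta> j \<omega>) ^ 4 \<partial>M) \<le> 8 * real n ^ 2" for n
    using moments_bound_orthogonal_increments[OF meas bounded orth1 orth3] by blast
qed

end

section \<open>Sampling with replacement\<close>

text \<open>Multiplied by card A so that no truncated subtraction m - 1 appears.\<close>
lemma sum_lists_sum_list_square:
  fixes d :: "'b \<Rightarrow> real"
  assumes "finite A" and centered: "(\<Sum>x\<in>A. d x) = 0"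
  shows "(\<Sum>u\<in>{u. set u \<subseteq> A \<and> length u = m}. (sum_list (map d u))^2) * real (card A)
        = real m * real (card A) ^ m * (\<Sum>x\<in>A. d x ^ 2)"
proof (induction m)
  case 0
  have "{u. set u \<subseteq> A \<and> length u = 0} = {[]}" by auto
  then show ?case by simp
next
  case (Suc m)
  let ?L = "{u. set u \<subseteq> A \<and> length u = m}"
  let ?D = "\<lambda>u. sum_list (map d u)"
  have "inj_on (\<lambda>(xs, x). x # xs) (?L \<times> A)" by (auto simp: inj_on_def)
  then have "(\<Sum>u\<in>{u. set u \<subseteq> A \<and> length u = Suc m}. (?D u)^2) = (\<Sum>(xs, x)\<in>?L \<times> A. (?D (x # xs))^2)"
    unfolding lists_length_Suc_eq by (subst sum.reindex) (simp_all add: case_prod_unfold)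
  also have "\<dots> = (\<Sum>xs\<in>?L. \<Sum>x\<in>A. (d x + ?D xs)^2)"
    by (subst sum.cartesian_product[symmetric]) simp
  also have "\<dots> = (\<Sum>xs\<in>?L. (\<Sum>x\<in>A. d x ^ 2) + 2 * ?D xs * (\<Sum>x\<in>A. d x) + real (card A) * (?D xs)^2)"
    by (simp add: power2_eq_square algebra_simps sum.distrib sum_distrib_left sum_distrib_right)
  also have "\<dots> = real (card A) ^ m * (\<Sum>x\<in>A. d x ^ 2) + real (card A) * (\<Sum>xs\<in>?L. (?D xs)^2)"
    using card_lists_length_eq[OF \<open>finite A\<close>, of m] by (simp add: centered sum.distrib sum_distrib_left)
  finally show ?case using Suc.IH by (simp add: algebra_simps)
qed

lemma sampling_mean_variance_bound:
  fixes c :: "'b \<Rightarrow> real" and A :: "'b set"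
  defines "Y \<equiv> (\<Sum>x\<in>A. c x) / real (card A)"
  assumes A: "finite A" "A \<noteq> {}" and "m \<ge> 1" and c01: "\<forall>x\<in>A. c x \<in> {0..1}"
  shows "(\<Sum>u\<in>{u. set u \<subseteq> A \<and> length u = m}. (sum_list (map c u) / real m - Y)^2)
           \<le> real (card A) ^ m / real m"
proof -
  let ?L = "{u. set u \<subseteq> A \<and> length u = m}"
  define d where "d = (\<lambda>x. c x - Y)"
  have "card A > 0" using A by (simp add: card_gt_0_iff)
  have centered: "(\<Sum>x\<in>A. d x) = 0"
    using \<open>card A > 0\<close> by (simp add: d_def Y_def sum_subtractf)
  have "0 \<le> Y" "Y \<le> 1"
    using c01 \<open>card A > 0\<close> sum_mono[of A c "\<lambda>_. 1"] sum_nonneg[of A c]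
    by (auto simp: Y_def field_simps)
  then have "(\<Sum>x\<in>A. d x ^ 2) \<le> (\<Sum>x\<in>A. 1)"
    using c01 by (intro sum_mono) (auto simp: d_def abs_square_le_1)
  then have "(\<Sum>u\<in>?L. (sum_list (map d u))^2) * real (card A) \<le> real m * real (card A) ^ m * real (card A)"
    unfolding sum_lists_sum_list_square[OF A(1) centered] by (intro mult_left_mono) auto
  then have "(\<Sum>u\<in>?L. (sum_list (map d u))^2) \<le> real m * real (card A) ^ m"
    using \<open>card A > 0\<close> by simp
  moreover have "sum_list (map c u) / real m - Y = sum_list (map d u) / real m" if "u \<in> ?L" for u
    using that \<open>m \<ge> 1\<close> by (simp add: d_def sum_list_subtractf sum_list_triv field_simps)
  ultimately show ?thesis
    using \<open>m \<ge> 1\<close> by (simp add: sum_divide_distrib[symmetric] field_simps power2_eq_square)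
qed

text \<open>The estimate behind Bernstein's proof of the Weierstrass theorem: by Chebyshev, the mean of
  m samples drawn with replacement is within \<delta> of the population mean except on a proportion
  1 / (\<delta>^2 m) of the samples, where h changes by at most 1.\<close>
lemma sampling_average_approx:
  fixes c :: "'b \<Rightarrow> real" and A :: "'b set" and h :: "real \<Rightarrow> real"
  defines "Y \<equiv> (\<Sum>x\<in>A. c x) / real (card A)"
  assumes A: "finite A" "A \<noteq> {}" and "m \<ge> 1" and c01: "\<forall>x\<in>A. c x \<in> {0..1}"
    and h01: "\<forall>s\<in>{0..1}. h s \<in> {0..1}" and "\<delta> > 0"
    and uc: "\<forall>s\<in>{0..1}. \<forall>t\<in>{0..1}. \<bar>s - t\<bar> < \<delta> \<longrightarrow> \<bar>h s - h t\<bar> < \<epsilon>"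
  shows "\<bar>(\<Sum>u\<in>{u. set u \<subseteq> A \<and> length u = m}. h (sum_list (map c u) / real m)) / real (card A) ^ m
           - h Y\<bar> \<le> \<epsilon> + 1 / (\<delta>^2 * real m)"
proof -
  let ?L = "{u. set u \<subseteq> A \<and> length u = m}"
  define s where "s u = sum_list (map c u) / real m" for u
  have "card A > 0" using A by (simp add: card_gt_0_iff)
  have cardL: "real (card ?L) = real (card A) ^ m" by (simp add: card_lists_length_eq A(1))
  have Y01: "Y \<in> {0..1}"
    using c01 \<open>card A > 0\<close> sum_mono[of A c "\<lambda>_. 1"] sum_nonneg[of A c]
    by (auto simp: Y_def field_simps)
  have s01: "s u \<in> {0..1}" if "u \<in> ?L" for u
  proof -
    have "sum_list (map c u) \<le> sum_list (map (\<lambda>_. 1) u)"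
      using that c01 by (intro sum_list_mono) auto
    moreover have "0 \<le> sum_list (map c u)" using that c01 by (intro sum_list_nonneg) auto
    ultimately show ?thesis using that \<open>m \<ge> 1\<close> by (auto simp: s_def sum_list_triv)
  qed
  have "\<epsilon> > 0" using uc Y01 \<open>\<delta> > 0\<close> by fastforce
  have pointwise: "\<bar>h (s u) - h Y\<bar> \<le> \<epsilon> + (s u - Y)^2 / \<delta>^2" if "u \<in> ?L" for u
  proof (cases "\<bar>s u - Y\<bar> < \<delta>")
    case True
    then show ?thesis using uc s01[OF that] Y01 by (smt (verit) divide_nonneg_nonneg zero_le_power2)
  next
    case False
    then have "1 \<le> (s u - Y)^2 / \<delta>^2"
      using \<open>\<delta> > 0\<close> by (simp add: abs_le_square_iff[symmetric] field_simps)
    moreover have "h (s u) \<in> {0..1}" "h Y \<in> {0..1}" using h01 s01[OF that] Y01 by blast+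
    then have "\<bar>h (s u) - h Y\<bar> \<le> 1" by auto
    ultimately show ?thesis using \<open>\<epsilon> > 0\<close> by linarith
  qed
  have "\<bar>(\<Sum>u\<in>?L. h (s u)) / real (card A) ^ m - h Y\<bar> = \<bar>\<Sum>u\<in>?L. h (s u) - h Y\<bar> / real (card A) ^ m"
    using \<open>card A > 0\<close> by (simp add: sum_subtractf cardL field_simps)
  also have "\<dots> \<le> (\<Sum>u\<in>?L. \<epsilon> + (s u - Y)^2 / \<delta>^2) / real (card A) ^ m"
    using pointwise by (intro divide_right_mono order_trans[OF sum_abs sum_mono]) auto
  also have "\<dots> = \<epsilon> + (\<Sum>u\<in>?L. (s u - Y)^2) / (\<delta>^2 * real (card A) ^ m)"
    using \<open>card A > 0\<close> by (simp add: sum.distrib cardL sum_divide_distrib[symmetric] field_simps)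
  also have "\<dots> \<le> \<epsilon> + (real (card A) ^ m / real m) / (\<delta>^2 * real (card A) ^ m)"
    using sampling_mean_variance_bound[OF A \<open>m \<ge> 1\<close> c01] \<open>\<delta> > 0\<close>
    by (intro add_left_mono divide_right_mono) (simp_all add: s_def Y_def)
  also have "\<dots> = \<epsilon> + 1 / (\<delta>^2 * real m)" using \<open>card A > 0\<close> by simp
  finally show ?thesis by (simp add: s_def)
qed

section \<open>The elephant random walk\<close>

locale erw = prob_space M for M :: "'a measure" +
  fixes q p :: real and f :: "real \<Rightarrow> real" and k :: "nat \<Rightarrow> nat"
    and X :: "nat \<Rightarrow> 'a \<Rightarrow> real" and U :: "nat \<Rightarrow> nat \<Rightarrow> 'a \<Rightarrow> nat"
  assumes process: "erw_process M q p f k X U"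
    and p_range: "p \<in> {0<..<1}" and f_range: "f ` {0..1} \<subseteq> {0..1}" and f_cont: "continuous_on {0..1} f"
    and k_pos: "\<forall>n\<ge>1. 1 \<le> k n" and k_lim: "filterlim k at_top sequentially"
begin

abbreviation g :: "real \<Rightarrow> real" where "g \<equiv> erw_g p f"

definition path :: "nat \<Rightarrow> 'a \<Rightarrow> real list" where
  "path n \<omega> = map (\<lambda>i. X i \<omega>) [1..<n+1]"

definition paths :: "nat \<Rightarrow> real list set" where
  "paths n = {v. set v \<subseteq> {-1, 1} \<and> length v = n}"

text \<open>Positions are counted from 1, as for the X i.\<close>
definition up :: "real list \<Rightarrow> nat \<Rightarrow> real" where
  "up v i = of_bool (v ! (i - 1) = 1)"

definition up_freq :: "nat \<Rightarrow> real list \<Rightarrow> real" where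
  "up_freq n v = (\<Sum>i=1..n. up v i) / real n"

definition samples :: "nat \<Rightarrow> nat list set" where
  "samples n = {u. set u \<subseteq> {1..n} \<and> length u = k n}"

text \<open>The conditional probability of X (n+1) = 1 given the path v of the first n steps.\<close>
definition drift :: "nat \<Rightarrow> real list \<Rightarrow> real" where
  "drift n v = (\<Sum>u\<in>samples n. g (sum_list (map (up v) u) / real (k n))) / real n ^ k n"

definition noise :: "nat \<Rightarrow> 'a \<Rightarrow> real" where
  "noise n \<omega> = of_bool (X (Suc n) \<omega> = 1) - drift n (path n \<omega>)"

lemma X_measurable: "X n \<in> measurable M (count_space UNIV)"
  and U_measurable: "n \<ge> 1 \<Longrightarrow> i \<in> {1..k n} \<Longrightarrow> U n i \<in> measurable M (count_space UNIV)"
  and X_values: "n \<ge> 1 \<Longrightarrow> \<omega> \<in> space M \<Longrightarrow> X n \<omega> \<in> {-1, 1}"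
  and U_values: "n \<ge> 1 \<Longrightarrow> i \<in> {1..k n} \<Longrightarrow> \<omega> \<in> space M \<Longrightarrow> U n i \<omega> \<in> {1..n}"
  using process unfolding erw_process_def by blast+

lemma path_nth: "m \<in> {1..n} \<Longrightarrow> path n \<omega> ! (m - 1) = X m \<omega>"
  by (auto simp: path_def simp del: upt_Suc)

lemma take_path: "j \<le> n \<Longrightarrow> take j (path n \<omega>) = path j \<omega>"
  by (simp add: path_def take_map del: upt_Suc)

lemma path_in_paths: "\<omega> \<in> space M \<Longrightarrow> path n \<omega> \<in> paths n"
  using X_values[of _ \<omega>] by (fastforce simp: path_def paths_def simp del: upt_Suc)

lemma finite_paths: "finite (paths n)"
  unfolding paths_def by (rule finite_lists_length_eq) simp

lemma finite_samples: "finite (samples n)"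
  unfolding samples_def by (rule finite_lists_length_eq) simp

lemma card_samples: "card (samples n) = n ^ k n"
  unfolding samples_def by (subst card_lists_length_eq) simp_all

definition path_event :: "nat \<Rightarrow> real list \<Rightarrow> 'a set" where
  "path_event n v = {\<omega>\<in>space M. path n \<omega> = v}"

lemma sets_path_event: "path_event n v \<in> sets M"
proof (cases "length v = n")
  case True
  then have "path_event n v = {\<omega>\<in>space M. \<forall>i<n. X (Suc i) \<omega> = v ! i}"
    by (auto simp: path_event_def path_def list_eq_iff_nth_eq simp del: upt_Suc)
  also have "\<dots> \<in> sets M" using X_measurable by measurable
  finally show ?thesis .
next
  case False
  then have "path_event n v = {}" by (auto simp: path_event_def path_def)
  then show ?thesis by (simp only: sets.empty_sets)
qed

lemma path_measurable: "path n \<in> measurable M (count_space (paths n))"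
  by (auto simp: measurable_count_space_eq2[OF finite_paths] path_in_paths vimage_def Int_def
      conj_commute path_event_def[symmetric] intro: sets_path_event)

lemma g_in_unit: "s \<in> {0..1} \<Longrightarrow> g s \<in> {0..1}"
  using erw_g_strict_bounds[of p f s] p_range f_range by fastforce

lemma sample_frac_in_unit: "u \<in> samples n \<Longrightarrow> sum_list (map (up v) u) / real (k n) \<in> {0..1}"
proof -
  assume "u \<in> samples n"
  then have "sum_list (map (up v) u) \<le> sum_list (map (\<lambda>_. 1) u)" "length u = k n"
    by (auto intro: sum_list_mono simp: up_def samples_def)
  moreover have "0 \<le> sum_list (map (up v) u)" by (intro sum_list_nonneg) (auto simp: up_def)
  ultimately show ?thesis by (auto simp: sum_list_triv divide_le_eq_1)
qed

lemma drift_in_unit: "drift n v \<in> {0..1}"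
proof -
  have terms: "g (sum_list (map (up v) u) / real (k n)) \<in> {0..1}" if "u \<in> samples n" for u
    using g_in_unit[OF sample_frac_in_unit[OF that]] .
  have "(\<Sum>u\<in>samples n. g (sum_list (map (up v) u) / real (k n))) \<le> (\<Sum>u\<in>samples n. 1)"
    using terms by (intro sum_mono) auto
  moreover have "0 \<le> (\<Sum>u\<in>samples n. g (sum_list (map (up v) u) / real (k n)))"
    using terms by (intro sum_nonneg) auto
  ultimately show ?thesis by (auto simp: drift_def card_samples divide_le_eq_1)
qed

lemma noise_measurable: "noise n \<in> borel_measurable M"
proof -
  have "(\<lambda>\<omega>. drift n (path n \<omega>)) \<in> borel_measurable M"
    by (rule measurable_compose[OF path_measurable borel_measurable_count_space])
  then show ?thesis unfolding noise_def using X_measurable by measurable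
qed

lemma noise_bounded: "\<bar>noise n \<omega>\<bar> \<le> 1"
  using drift_in_unit[of n "path n \<omega>"] by (auto simp: noise_def)

lemma erw_C_eq_sum_list_up:
  assumes "n \<ge> 1" "\<omega> \<in> space M"
  shows "real (erw_C k X U n \<omega>) = sum_list (map (up (path n \<omega>)) (erw_Uvec k U n \<omega>))"
proof -
  have "sum_list (map (up (path n \<omega>)) (erw_Uvec k U n \<omega>)) = (\<Sum>i\<in>{1..k n}. up (path n \<omega>) (U n i \<omega>))"
    by (simp add: erw_Uvec_def sum_list_distinct_conv_sum_set atLeastLessThanSuc_atLeastAtMost
        del: upt_Suc)
  also have "\<dots> = (\<Sum>i\<in>{1..k n}. of_bool (X (U n i \<omega>) \<omega> = 1))"
  proof (intro sum.cong refl)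
    fix i assume "i \<in> {1..k n}"
    then have "U n i \<omega> \<in> {1..n}" by (rule U_values[OF assms(1) _ assms(2)])
    from path_nth[OF this] show "up (path n \<omega>) (U n i \<omega>) = of_bool (X (U n i \<omega>) \<omega> = 1)"
      by (simp add: up_def)
  qed
  finally show ?thesis by (simp add: erw_C_def Int_def)
qed

lemma sets_Uvec_eq:
  assumes "n \<ge> 1"
  shows "{\<omega>\<in>space M. erw_Uvec k U n \<omega> = u} \<in> sets M"
proof (cases "length u = k n")
  case True
  have "{\<omega>\<in>space M. erw_Uvec k U n \<omega> = u} = {\<omega>\<in>space M. \<forall>i\<in>{..<k n}. U n (Suc i) \<omega> = u ! i}"
    using True by (auto simp: erw_Uvec_def list_eq_iff_nth_eq simp del: upt_Suc)
  also have "\<dots> \<in> sets M"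
  proof (intro sets.sets_Collect_finite_All)
    fix i assume "i \<in> {..<k n}"
    then have [measurable]: "U n (Suc i) \<in> measurable M (count_space UNIV)"
      using U_measurable[OF assms] by simp
    show "{\<omega>\<in>space M. U n (Suc i) \<omega> = u ! i} \<in> sets M" by measurable
  qed simp
  finally show ?thesis .
next
  case False
  then have "{\<omega>\<in>space M. erw_Uvec k U n \<omega> = u} = {}" by (auto simp: erw_Uvec_def)
  then show ?thesis by (simp only: sets.empty_sets)
qed

lemma fst_erw_hist: "fst (erw_hist k X U n \<omega>) = path n \<omega>"
  by (simp add: erw_hist_def path_def del: upt_Suc)

lemma measure_path_event_Uvec:
  assumes "n \<ge> 1" "u \<in> samples n"
  shows "measure M (path_event n v \<inter> {\<omega>\<in>space M. erw_Uvec k U n \<omega> = u})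
           = measure M (path_event n v) / real n ^ k n"
proof -
  have "measure M {\<omega>\<in>space M. erw_hist k X U n \<omega> \<in> {h. fst h = v} \<and> erw_Uvec k U n \<omega> = u}
        = measure M {\<omega>\<in>space M. erw_hist k X U n \<omega> \<in> {h. fst h = v}} / real n ^ k n"
    using process assms unfolding erw_process_def samples_def by blast
  moreover have "{\<omega>\<in>space M. erw_hist k X U n \<omega> \<in> {h. fst h = v} \<and> erw_Uvec k U n \<omega> = u}
      = path_event n v \<inter> {\<omega>\<in>space M. erw_Uvec k U n \<omega> = u}"
    by (auto simp: path_event_def fst_erw_hist)
  ultimately show ?thesis by (simp add: path_event_def fst_erw_hist)
qed

lemma measure_path_event_up_next:
  assumes "n \<ge> 1"
  shows "measure M (path_event n v \<inter> {\<omega>\<in>space M. X (Suc n) \<omega> = 1})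
           = (\<integral>\<omega>. indicator (path_event n v) \<omega> * g (real (erw_C k X U n \<omega>) / real (k n)) \<partial>M)"
proof -
  define T :: "((real list \<times> nat list list) \<times> nat list) set" where "T = {(h, u). fst h = v}"
  have "measure M {\<omega>\<in>space M. (erw_hist k X U n \<omega>, erw_Uvec k U n \<omega>) \<in> T \<and> X (Suc n) \<omega> = 1}
        = (LINT \<omega>:{\<omega>\<in>space M. (erw_hist k X U n \<omega>, erw_Uvec k U n \<omega>) \<in> T}|M.
             g (real (erw_C k X U n \<omega>) / real (k n)))"
    using process assms unfolding erw_process_def by blast
  moreover have "{\<omega>\<in>space M. (erw_hist k X U n \<omega>, erw_Uvec k U n \<omega>) \<in> T \<and> X (Suc n) \<omega> = 1}
      = path_event n v \<inter> {\<omega>\<in>space M. X (Suc n) \<omega> = 1}"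
    by (auto simp: T_def path_event_def fst_erw_hist)
  moreover have "{\<omega>\<in>space M. (erw_hist k X U n \<omega>, erw_Uvec k U n \<omega>) \<in> T} = path_event n v"
    by (auto simp: T_def path_event_def fst_erw_hist)
  ultimately show ?thesis by (simp add: set_lebesgue_integral_def)
qed

lemma Uvec_in_samples: "n \<ge> 1 \<Longrightarrow> \<omega> \<in> space M \<Longrightarrow> erw_Uvec k U n \<omega> \<in> samples n"
  using U_values by (fastforce simp: erw_Uvec_def samples_def simp del: upt_Suc)

lemma path_event_subset: "path_event n v \<subseteq> space M"
  by (auto simp: path_event_def)

lemma indicator_path_event_up_next:
  "indicator (path_event n v) \<omega> * of_bool (X (Suc n) \<omega> = 1)
     = (indicator (path_event n v \<inter> {\<omega>\<in>space M. X (Suc n) \<omega> = 1}) \<omega> :: real)"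
  by (auto simp: indicator_def path_event_def)

text \<open>Integrating out the sample, which is uniform and independent of the path.\<close>
lemma integral_path_event_up_next:
  assumes "n \<ge> 1"
  shows "(\<integral>\<omega>. indicator (path_event n v) \<omega> * of_bool (X (Suc n) \<omega> = 1) \<partial>M)
           = measure M (path_event n v) * drift n v"
proof -
  let ?E = "path_event n v" and ?W = "\<lambda>u. {\<omega>\<in>space M. erw_Uvec k U n \<omega> = u}"
  define c where "c u = g (sum_list (map (up v) u) / real (k n))" for u
  have sets: "?E \<inter> ?W u \<in> sets M" for u using sets_path_event sets_Uvec_eq[OF assms] by blast
  have decompose: "indicator ?E \<omega> * g (real (erw_C k X U n \<omega>) / real (k n))
      = (\<Sum>u\<in>samples n. c u * indicator (?E \<inter> ?W u) \<omega>)" if "\<omega> \<in> space M" for \<omega>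
  proof -
    have "(\<Sum>u\<in>samples n. c u * indicator (?E \<inter> ?W u) \<omega>)
        = (\<Sum>u\<in>samples n. if erw_Uvec k U n \<omega> = u then c u * indicator ?E \<omega> else 0)"
      using that by (intro sum.cong) (auto simp: indicator_def)
    also have "\<dots> = c (erw_Uvec k U n \<omega>) * indicator ?E \<omega>"
      using Uvec_in_samples[OF assms that] finite_samples by simp
    finally show ?thesis
      using that by (auto simp: c_def erw_C_eq_sum_list_up[OF assms that] path_event_def indicator_def)
  qed
  have "(\<integral>\<omega>. indicator ?E \<omega> * of_bool (X (Suc n) \<omega> = 1) \<partial>M)
      = measure M (?E \<inter> {\<omega>\<in>space M. X (Suc n) \<omega> = 1})"
    using path_event_subset by (simp add: indicator_path_event_up_next Int_absorb2 le_infI1)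
  also have "\<dots> = (\<integral>\<omega>. (\<Sum>u\<in>samples n. c u * indicator (?E \<inter> ?W u) \<omega>) \<partial>M)"
    unfolding measure_path_event_up_next[OF assms] by (intro Bochner_Integration.integral_cong refl decompose)
  also have "\<dots> = (\<Sum>u\<in>samples n. (\<integral>\<omega>. c u * indicator (?E \<inter> ?W u) \<omega> \<partial>M))"
    using sets
    by (intro Bochner_Integration.integral_sum integrable_mult_right integrable_real_indicator)
      (auto simp: less_top[symmetric])
  also have "\<dots> = (\<Sum>u\<in>samples n. c u * measure M (?E \<inter> ?W u))"
    using sets by (intro sum.cong refl) (simp add: Int_absorb2 sets.sets_into_space)
  also have "\<dots> = (\<Sum>u\<in>samples n. c u * (measure M ?E / real n ^ k n))"
    using measure_path_event_Uvec[OF assms] by simp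
  also have "\<dots> = (\<Sum>u\<in>samples n. c u) * (measure M ?E / real n ^ k n)"
    by (simp add: sum_distrib_right sum_divide_distrib)
  also have "\<dots> = measure M ?E * drift n v" by (simp add: drift_def c_def)
  finally show ?thesis .
qed

lemma integral_path_fun_noise:
  assumes "n \<ge> 1"
  shows "(\<integral>\<omega>. \<phi> (path n \<omega>) * noise n \<omega> \<partial>M) = 0"
proof -
  let ?E = "path_event n"
  have up_int: "integrable M (\<lambda>\<omega>. indicator (?E v) \<omega> * of_bool (X (Suc n) \<omega> = 1) :: real)" for v
    by (intro integrable_bounded[where C = 1] borel_measurable_times borel_measurable_indicator
        sets_path_event measurable_compose[OF X_measurable borel_measurable_count_space])
      (auto simp: indicator_def)
  have decompose: "\<phi> (path n \<omega>) * noise n \<omega> = (\<Sum>v\<in>paths n. \<phi> v *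
      (indicator (?E v) \<omega> * of_bool (X (Suc n) \<omega> = 1) - drift n v * indicator (?E v) \<omega>))"
    if "\<omega> \<in> space M" for \<omega>
  proof -
    have "(\<Sum>v\<in>paths n. \<phi> v * (indicator (?E v) \<omega> * of_bool (X (Suc n) \<omega> = 1) - drift n v * indicator (?E v) \<omega>))
        = (\<Sum>v\<in>paths n. if path n \<omega> = v then \<phi> v * noise n \<omega> else 0)"
      using that by (intro sum.cong) (auto simp: path_event_def noise_def indicator_def)
    also have "\<dots> = \<phi> (path n \<omega>) * noise n \<omega>"
      using path_in_paths[OF that] finite_paths by simp
    finally show ?thesis by simp
  qed
  have ind_int: "integrable M (\<lambda>\<omega>. drift n v * indicator (?E v) \<omega> :: real)" for v
    by (intro integrable_mult_right integrable_real_indicator sets_path_event) (simp add: less_top[symmetric])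
  have "(\<integral>\<omega>. \<phi> (path n \<omega>) * noise n \<omega> \<partial>M) = (\<integral>\<omega>. (\<Sum>v\<in>paths n. \<phi> v *
      (indicator (?E v) \<omega> * of_bool (X (Suc n) \<omega> = 1) - drift n v * indicator (?E v) \<omega>)) \<partial>M)"
    by (rule Bochner_Integration.integral_cong[OF refl decompose])
  also have "\<dots> = (\<Sum>v\<in>paths n. (\<integral>\<omega>. \<phi> v *
      (indicator (?E v) \<omega> * of_bool (X (Suc n) \<omega> = 1) - drift n v * indicator (?E v) \<omega>) \<partial>M))"
    by (intro Bochner_Integration.integral_sum integrable_mult_right Bochner_Integration.integrable_diff
        up_int ind_int)
  also have "\<dots> = (\<Sum>v\<in>paths n. \<phi> v *
      ((\<integral>\<omega>. indicator (?E v) \<omega> * of_bool (X (Suc n) \<omega> = 1) \<partial>M) - drift n v * measure M (?E v)))"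
    using up_int ind_int path_event_subset by (simp add: Bochner_Integration.integral_diff Int_absorb2)
  also have "\<dots> = 0" by (simp add: integral_path_event_up_next[OF assms])
  finally show ?thesis .
qed

lemma AE_noise_average_tendsto_zero: "AE \<omega> in M. (\<lambda>n. (\<Sum>j<n. noise j \<omega>) / real n) \<longlonglongrightarrow> 0"
proof (rule AE_tendsto_zero_orthogonal_increments[OF noise_measurable noise_bounded])
  have orth: "(\<integral>\<omega>. (\<Sum>j<n. noise j \<omega>) ^ m * noise n \<omega> \<partial>M) = 0" if "m > 0" for n m
  proof (cases "n = 0")
    case False
    define \<Phi> where "\<Phi> v = (\<Sum>j<n. of_bool (v ! j = 1) - drift j (take j v)) ^ m" for v
    have "(\<Sum>j<n. noise j \<omega>) ^ m = \<Phi> (path n \<omega>)" for \<omega>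
      by (auto simp: \<Phi>_def noise_def take_path path_nth[of "Suc _" n, simplified] intro!: sum.cong arg_cong[where f = "\<lambda>x. x ^ m"])
    then show ?thesis using integral_path_fun_noise[of n \<Phi>] False by simp
  qed (use that in simp)
  show "(\<integral>\<omega>. (\<Sum>j<n. noise j \<omega>) * noise n \<omega> \<partial>M) = 0" for n using orth[of 1 n] by simp
  show "(\<integral>\<omega>. (\<Sum>j<n. noise j \<omega>) ^ 3 * noise n \<omega> \<partial>M) = 0" for n using orth[of 3 n] by simp
qed

lemma drift_approx:
  assumes "\<epsilon> > 0"
  shows "eventually (\<lambda>n. \<forall>v. \<bar>drift n v - g (up_freq n v)\<bar> \<le> 2 * \<epsilon>) sequentially"
proof -
  have "uniformly_continuous_on {0..1} g"
    by (intro compact_uniformly_continuous continuous_on_erw_g f_cont) simp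
  then obtain \<delta> where "\<delta> > 0" and \<delta>: "\<forall>s\<in>{0..1}. \<forall>t\<in>{0..1}. \<bar>s - t\<bar> < \<delta> \<longrightarrow> \<bar>g s - g t\<bar> < \<epsilon>"
    unfolding uniformly_continuous_on_def dist_real_def using \<open>\<epsilon> > 0\<close> by metis
  obtain K :: nat where K: "1 / (\<delta>^2 * \<epsilon>) \<le> real K" using real_arch_simple by blast
  from filterlim_at_top[THEN iffD1, OF k_lim, rule_format, of K] eventually_ge_at_top[of 1]
  show ?thesis
  proof eventually_elim
    case (elim n)
    have "k n \<ge> 1" using k_pos elim by simp
    have "1 / (\<delta>^2 * \<epsilon>) \<le> real (k n)" using K elim(1) of_nat_mono[OF elim(1)] by linarith
    then have "1 \<le> real (k n) * (\<delta>^2 * \<epsilon>)" using \<open>\<delta> > 0\<close> \<open>\<epsilon> > 0\<close> by (simp add: divide_le_eq)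
    then have small: "1 / (\<delta>^2 * real (k n)) \<le> \<epsilon>"
      using \<open>k n \<ge> 1\<close> \<open>\<delta> > 0\<close> by (simp add: divide_le_eq mult_ac)
    have approx: "\<bar>drift n v - g (up_freq n v)\<bar> \<le> \<epsilon> + 1 / (\<delta>^2 * real (k n))" for v
      using sampling_average_approx[of "{1..n}" "k n" "up v" g \<delta> \<epsilon>] elim \<open>k n \<ge> 1\<close> \<open>\<delta> > 0\<close> \<delta> g_in_unit
      by (simp add: drift_def up_freq_def samples_def up_def)
    show ?case
    proof
      fix v show "\<bar>drift n v - g (up_freq n v)\<bar> \<le> 2 * \<epsilon>" using approx[of v] small by linarith
    qed
  qed
qed

lemma up_freq_in_unit: "up_freq n v \<in> {0..1}"
proof -
  have "(\<Sum>i=1..n. up v i) \<le> (\<Sum>i=1..n. 1)" by (intro sum_mono) (simp add: up_def)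
  moreover have "0 \<le> (\<Sum>i=1..n. up v i)" by (intro sum_nonneg) (simp add: up_def)
  ultimately show ?thesis by (auto simp: up_freq_def divide_le_eq_1)
qed

lemma up_freq_path: "real n * up_freq n (path n \<omega>) = (\<Sum>i=1..n. of_bool (X i \<omega> = 1))"
proof -
  have "(\<Sum>i=1..n. up (path n \<omega>) i) = (\<Sum>i=1..n. of_bool (X i \<omega> = 1))"
  proof (intro sum.cong refl)
    fix i assume "i \<in> {1..n}"
    from path_nth[OF this] show "up (path n \<omega>) i = of_bool (X i \<omega> = 1)" by (simp add: up_def)
  qed
  then show ?thesis by (cases "n = 0") (simp_all add: up_freq_def)
qed

lemma drift_bias_tendsto_zero: "(\<lambda>n. drift n (w n) - g (up_freq n (w n))) \<longlonglongrightarrow> 0"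
  unfolding tendsto_iff dist_real_def
proof (intro allI impI)
  fix r :: real assume "r > 0"
  then have "r / 3 > 0" by simp
  from drift_approx[OF this] show "eventually (\<lambda>n. \<bar>drift n (w n) - g (up_freq n (w n)) - 0\<bar> < r) sequentially"
  proof eventually_elim
    case (elim n)
    then have "\<bar>drift n (w n) - g (up_freq n (w n))\<bar> \<le> 2 * (r / 3)" by blast
    with \<open>r > 0\<close> show ?case by simp
  qed
qed

lemma sum_X_eq_up_freq:
  assumes "\<omega> \<in> space M"
  shows "(\<Sum>i=1..n. X i \<omega>) = 2 * (real n * up_freq n (path n \<omega>)) - real n"
proof -
  have "X i \<omega> = 2 * of_bool (X i \<omega> = 1) - 1" if "i \<in> {1..n}" for i
    using X_values[of i \<omega>] that assms by auto
  then have "(\<Sum>i=1..n. X i \<omega>) = (\<Sum>i=1..n. 2 * of_bool (X i \<omega> = 1) - 1)"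
    by (intro sum.cong) auto
  also have "\<dots> = 2 * (\<Sum>i=1..n. of_bool (X i \<omega> = 1)) - real n"
    by (simp only: sum_subtractf sum_distrib_left[symmetric]) simp
  finally show ?thesis by (simp only: up_freq_path)
qed

text \<open>The frequency y of up-steps, corrected by the average noise, satisfies the deterministic
  recursion of average_recursion_tendsto with the sampling bias as error term.\<close>
theorem strong_law:
  assumes xs: "\<forall>x\<in>{0..1}. x \<noteq> xs \<longrightarrow> (g x - x) * (x - xs) < 0"
  shows "AE \<omega> in M. (\<lambda>n. (\<Sum>i=1..n. X i \<omega>) / real n) \<longlonglongrightarrow> 2 * xs - 1"
  using AE_noise_average_tendsto_zero
proof (rule AE_mp, intro AE_I2 impI)
  fix \<omega> assume "\<omega> \<in> space M" and noise_avg: "(\<lambda>n. (\<Sum>j<n. noise j \<omega>) / real n) \<longlonglongrightarrow> 0"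
  define y where "y n = up_freq n (path n \<omega>)" for n
  define v where "v n = y n - (\<Sum>j<n. noise j \<omega>) / real n" for n
  define e where "e n = drift n (path n \<omega>) - g (y n)" for n
  have rec: "\<forall>n\<ge>1. real (Suc n) * v (Suc n) = real n * v n + g (y n) + e n"
  proof (intro allI impI)
    fix n :: nat assume "n \<ge> 1"
    have "real (Suc n) * v (Suc n) = real (Suc n) * y (Suc n) - (\<Sum>j<Suc n. noise j \<omega>)"
      by (simp add: v_def right_diff_distrib)
    also have "\<dots> = real n * y n + of_bool (X (Suc n) \<omega> = 1) - (\<Sum>j<n. noise j \<omega>) - noise n \<omega>"
      using up_freq_path[of "Suc n" \<omega>] up_freq_path[of n \<omega>] by (simp add: y_def)
    also have "\<dots> = real n * v n + g (y n) + e n"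
      using \<open>n \<ge> 1\<close> by (simp add: v_def e_def noise_def right_diff_distrib)
    finally show "real (Suc n) * v (Suc n) = real n * v n + g (y n) + e n" .
  qed
  have "e \<longlonglongrightarrow> 0" unfolding e_def y_def by (rule drift_bias_tendsto_zero)
  moreover have "(\<lambda>n. y n - v n) \<longlonglongrightarrow> 0" using noise_avg by (simp add: v_def)
  moreover have "\<forall>n. y n \<in> {0..1}" using up_freq_in_unit by (simp add: y_def)
  ultimately have "y \<longlonglongrightarrow> xs"
    using average_recursion_tendsto[OF continuous_on_erw_g[OF f_cont] _ xs _ rec] g_in_unit by blast
  then have "(\<lambda>n. 2 * y n - 1) \<longlonglongrightarrow> 2 * xs - 1" by (intro tendsto_intros)
  moreover have "2 * y n - 1 = (\<Sum>i=1..n. X i \<omega>) / real n" if "n \<ge> 1" for n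
    using that sum_X_eq_up_freq[OF \<open>\<omega> \<in> space M\<close>, of n] by (simp add: y_def field_simps)
  ultimately show "(\<lambda>n. (\<Sum>i=1..n. X i \<omega>) / real n) \<longlonglongrightarrow> 2 * xs - 1"
    by (rule Lim_transform_eventually[OF _ eventually_mono[OF eventually_ge_at_top[of 1]]])
qed

end

lemma holder_imp_continuous_on:
  fixes f :: "real \<Rightarrow> real"
  assumes holder: "\<forall>x\<in>S. \<forall>y\<in>S. \<bar>f x - f y\<bar> \<le> L * \<bar>x - y\<bar> powr \<alpha>"
    and "0 < \<alpha>" "0 < L"
  shows "continuous_on S f"
  unfolding continuous_on_iff
proof (intro ballI allI impI)
  fix x e :: real assume "x \<in> S" "0 < e"
  define d where "d = (e / L) powr (1 / \<alpha>)"
  have "0 < d" "d powr \<alpha> = e / L"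
    using \<open>0 < e\<close> assms(2,3) by (simp_all add: d_def powr_powr)
  have "dist (f y) (f x) < e" if "y \<in> S" "dist y x < d" for y
  proof -
    have "\<bar>f y - f x\<bar> \<le> L * \<bar>y - x\<bar> powr \<alpha>" using holder that(1) \<open>x \<in> S\<close> by blast
    also have "\<dots> < L * d powr \<alpha>"
      using that(2) assms(2,3) by (intro mult_strict_left_mono powr_less_mono2) (auto simp: dist_real_def)
    also have "\<dots> = e" using \<open>d powr \<alpha> = e / L\<close> assms(3) by simp
    finally show ?thesis by (simp add: dist_real_def)
  qed
  with \<open>0 < d\<close> show "\<exists>d>0. \<forall>y\<in>S. dist y x < d \<longrightarrow> dist (f y) (f x) < e" by blast
qed

lemma C1_01_imp_continuous_on: "C1_01 f f' \<Longrightarrow> continuous_on {0..1} f"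
  unfolding C1_01_def by (blast intro: DERIV_continuous_on)

lemma C2_01_imp_continuous_on: "C2_01 f \<Longrightarrow> continuous_on {0..1} f"
  unfolding C2_01_def by (blast intro: DERIV_continuous_on)

theorem theorem4p6:
  fixes M :: "'a measure" and q p :: real and f :: "real \<Rightarrow> real" and k :: "nat \<Rightarrow> nat"
    and X :: "nat \<Rightarrow> 'a \<Rightarrow> real" and U :: "nat \<Rightarrow> nat \<Rightarrow> 'a \<Rightarrow> nat"
  assumes q: "q \<in> {0..1}"
    and p: "p \<in> {0<..<1}" "p \<noteq> 1/2"
    and f_range: "f ` {0..1} \<subseteq> {0..1}"
    and k_mono: "\<forall>n\<ge>1. k n \<le> k (Suc n)"
    and k_bounds: "\<forall>n\<ge>1. 1 \<le> k n \<and> k n \<le> n"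
    and k_lim: "filterlim k at_top sequentially"
    and proc: "erw_process M q p f k X U"
    and F: "(continuous_on {0..1} f \<and>
              summable (\<lambda>n. 1 / (real (Suc n) + 1) * modulus01 f (real (k (Suc n)) powr (-1/2))))
          \<or> (\<exists>\<alpha> L. 0 < \<alpha> \<and> \<alpha> \<le> 1 \<and> L > 0 \<and>
              (\<forall>x\<in>{0..1}. \<forall>y\<in>{0..1}. \<bar>f x - f y\<bar> \<le> L * \<bar>x - y\<bar> powr \<alpha>) \<and>
              summable (\<lambda>n. 1 / (real (Suc n) + 1) * real (k (Suc n)) powr (-\<alpha>/2)))
          \<or> (\<exists>f'. C1_01 f f' \<and>
              summable (\<lambda>n. 1 / ((real (Suc n) + 1) * sqrt (real (k (Suc n))))
                               * modulus01 f' (real (k (Suc n)) powr (-1/2))))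
          \<or> (C2_01 f \<and> summable (\<lambda>n. 1 / ((real (Suc n) + 1) * real (k (Suc n)))))"
  shows
    "(\<forall>xs\<in>{0..1}. erw_g p f xs = xs \<and>
        (\<forall>x\<in>{0..1}. erw_g p f x = x \<longrightarrow> x = xs) \<and>
        (\<forall>x\<in>{0..1}. x \<noteq> xs \<longrightarrow> (erw_g p f x - x) * (x - xs) < 0)
        \<longrightarrow> (AE \<omega> in M. (\<lambda>n. (\<Sum>i=1..n. X i \<omega>) / real n) \<longlonglongrightarrow> 2 * xs - 1))
   \<and> (\<forall>xs\<in>{0..1}. erw_g p f xs = xs \<and> (\<forall>x\<in>{0..1}. erw_g p f x = x \<longrightarrow> x = xs)
        \<longrightarrow> (AE \<omega> in M. (\<lambda>n. (\<Sum>i=1..n. X i \<omega>) / real n) \<longlonglongrightarrow> 2 * xs - 1))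
   \<and> ((\<exists>f'. C1_01 f f' \<and>
          ((1/2 < p \<and> strict_antimono_on {0..1} f) \<or> (p < 1/2 \<and> strict_mono_on {0..1} f)))
       \<or> (C2_01 f \<and> (strictly_convex_on {0<..<1} f \<or> strictly_convex_on {0<..<1} (\<lambda>x. - f x)))
       \<or> (\<exists>c. (\<forall>x\<in>{0..1}. \<forall>y\<in>{0..1}. \<bar>f x - f y\<bar> \<le> c * \<bar>x - y\<bar>) \<and> c * \<bar>2 * p - 1\<bar> < 1)
      \<longrightarrow> (\<exists>!xs. xs \<in> {0..1} \<and> erw_g p f xs = xs) \<and>
          (\<forall>xs\<in>{0..1}. erw_g p f xs = xs
             \<longrightarrow> (AE \<omega> in M. (\<lambda>n. (\<Sum>i=1..n. X i \<omega>) / real n) \<longlonglongrightarrow> 2 * xs - 1)))"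
proof -
  from F consider "continuous_on {0..1} f"
    | \<alpha> L where "0 < \<alpha>" "0 < L" "\<forall>x\<in>{0..1}. \<forall>y\<in>{0..1}. \<bar>f x - f y\<bar> \<le> L * \<bar>x - y\<bar> powr \<alpha>"
    | f' where "C1_01 f f'" | "C2_01 f"
    by blast
  then have f_cont: "continuous_on {0..1} f"
    by cases (auto intro: holder_imp_continuous_on C1_01_imp_continuous_on C2_01_imp_continuous_on)
  have "prob_space M" using proc by (simp add: erw_process_def)
  then interpret erw M q p f k X U
    by (rule erw.intro) (use proc p f_range f_cont k_bounds k_lim in \<open>unfold_locales, auto\<close>)
  have g_cont: "continuous_on {0..1} (erw_g p f)" by (rule continuous_on_erw_g[OF f_cont])
  have g_ends: "0 \<le> erw_g p f 0" "erw_g p f 1 \<le> 1" using g_in_unit[of 0] g_in_unit[of 1] by auto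
  have law_if_unique: "AE \<omega> in M. (\<lambda>n. (\<Sum>i=1..n. X i \<omega>) / real n) \<longlonglongrightarrow> 2 * xs - 1"
    if "\<forall>x\<in>{0..1}. erw_g p f x = x \<longrightarrow> x = xs" for xs
    using strong_law unique_fixpoint_imp_attracting[OF g_cont g_ends that] by blast
  show ?thesis
    using strong_law law_if_unique erw_g_ex1_fixpoint[OF p f_range f_cont]
    by (intro conjI ballI impI) blast+
qed

end
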